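(* Let $(P_n)_{n\ge0}$ be monic polynomials with $\deg P_n=n$, $P_n(x)=\sum_{i=0}^nb_{n,i}x^i$, let $(\gamma_n)_{n\ge1}$ be nonzero complex numbers, and let $P_0^{(1)}=P_0$, $P_n^{(1)}=P_n+\gamma_nP_{n-1}$ ($n\ge1$), with coefficients $P_n^{(1)}(x)=\sum_{i=0}^nb^{(1)}_{n,i}x^i$. (In the paper's setting the $P_n$ are the eigenpolynomials of a differential operator as in the standing assumptions below.) For a family $(Q_m)$ of monic polynomials, $\deg Q_m=m$, with coefficients $q_{m,l}$, and integers $n\ge1$, $1\le k\le n$, $s\ge1$, let $\Delta_{k,n,s}(Q)$ be the determinant of the $k\times k$ matrix with first row entries $\left[\binom{n-k}{s-1}+\cdots+\binom{n-k+c-1}{s-1}\right]q_{n-k+c,\,n-k}$ ($1\le c\le k$) and, for $2\le\rho\le k$, entries $q_{n-k+c,\;n-k+\rho-1}$. Write $\Delta_{k,n,s}=\Delta_{k,n,s}(P)$ and $\Delta^{(1)}_{k,n,s}=\Delta_{k,n,s}(P^{(1)})$. Then $$\Delta^{(1)}_{k,n,s}=\Delta_{k,n,s}+\sum_{j=0}^{k-1}(-1)^j\binom{n-k+j}{s-1}b_{n-k+j,\,n-k}\left[\sum_{r=1}^{k-j}\gamma_{n-k+j+1}\cdots\gamma_{n-k+j+r}\,E_{k,n,j+r-1}\right],$$ where for $0\le t\le k-1$, $E_{k,n,t}$ is the determinant of the $(k-t-1)\times(k-t-1)$ matrix with $(\rho,c)$ entry $b_{n-k+t+1+c,\;n-k+t+\rho}$,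 and $E_{k,n,k-1}=1$.
   Context: Conventions: $q_{m,m}=1$, $q_{m,l}=0$ for $l>m$ (likewise for $b$, $b^{(1)}$); $\binom{m}{s-1}=0$ for $m<s-1$. Standing assumptions of the paper: $(P_n)$ are monic eigenpolynomials of $L=\sum_{i=0}^Na_i(x)\partial_x^i$ ($\deg a_i\le i$, $a_0\equiv0$) with eigenvalues $\lambda_n$, $\lambda_0=0$, $\lambda_n\notin\{0,\lambda_1,\dots,\lambda_{n-1}\}$. *)

theory Defs
  imports Complex_Main "HOL-Computational_Algebra.Polynomial" "Jordan_Normal_Form.Determinant"
begin

definition P1 :: "(nat \<Rightarrow> complex poly) \<Rightarrow> (nat \<Rightarrow> complex) \<Rightarrow> nat \<Rightarrow> complex poly" where
  "P1 P \<gamma> n = (if n = 0 then P 0 else P n + smult (\<gamma> n) (P (n - 1)))"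

text \<open>Delta_{k,n,s}(Q): k x k determinant; row index rho = i+1, column index c = j+1
  (0-based i, j).\<close>
definition Delta :: "(nat \<Rightarrow> complex poly) \<Rightarrow> nat \<Rightarrow> nat \<Rightarrow> nat \<Rightarrow> complex" where
  "Delta Q k n s = det (mat k k (\<lambda>(i, j).
      if i = 0 then (\<Sum>c'\<le>j. of_nat ((n - k + c') choose (s - 1))) * coeff (Q (n - k + (j + 1))) (n - k)
      else coeff (Q (n - k + (j + 1))) (n - k + (i + 1) - 1)))"

definition E :: "(nat \<Rightarrow> complex poly) \<Rightarrow> nat \<Rightarrow> nat \<Rightarrow> nat \<Rightarrow> complex" where
  "E P k n t = (if t = k - 1 then 1 else
      det (mat (k - t - 1) (k - t - 1) (\<lambda>(i, j).
        coeff (P (n - k + t + 1 + (j + 1))) (n - k + t + (i + 1)))))"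

end

(* Since P1_N = P_N + gamma_N P_(N-1), the c-th column of the matrix of Delta^(1)_{k,n,s} is
   the c-th column of the matrix of Delta_{k,n,s} plus gamma_(n-k+c) times its (c-1)-th column,
   except in the first row, where the binomial weights change as well. Undoing these column
   operations (a unit bidiagonal factor) leaves the matrix of Delta_{k,n,s} with a vector z added
   to its first row, where z_c + gamma z_(c-1) = gamma binom(n-k+c-1, s-1) b_(n-k+c-1, n-k).
   Below the first row that matrix is upper Hessenberg with unit subdiagonal, so the cofactors of
   the first row are +-E_{k,n,c}. Solving the recurrence for z and exchanging the order of
   summation gives the formula. *)
theory Submission
  imports Defs
begin

lemma det_add_scaled_previous_columns:
  fixes A :: "'a::comm_ring_1 mat"
  assumes A: "A \<in> carrier_mat n n"
  shows "det (mat n n (\<lambda>(i,j). A $$ (i,j) + (if j = 0 then 0 else g j * A $$ (i, j - 1)))) = det A"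
proof -
  define T where "T = mat n n (\<lambda>(i,j). if i = j then 1 else if j = i + 1 then g j else 0)"
  have T: "T \<in> carrier_mat n n" by (simp add: T_def)
  have "upper_triangular T" by (auto simp: upper_triangular_def T_def)
  then have "det T = prod_list (diag_mat T)" using det_upper_triangular T by blast
  also have "diag_mat T = replicate n 1"
    by (rule nth_equalityI) (auto simp: diag_mat_def T_def)
  finally have det_T: "det T = 1" by simp
  have "mat n n (\<lambda>(i,j). A $$ (i,j) + (if j = 0 then 0 else g j * A $$ (i, j - 1))) = A * T"
  proof (rule eq_matI)
    fix i j assume "i < dim_row (A * T)" "j < dim_col (A * T)"
    then have i: "i < n" and j: "j < n" using A T by auto
    have "(A * T) $$ (i, j) = (\<Sum>l<n. A $$ (i,l) * T $$ (l,j))"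
      using i j A T by (simp add: scalar_prod_def lessThan_atLeast0)
    also have "\<dots> = (\<Sum>l<n. (if l = j then A $$ (i,l) else 0)
                        + (if l = j - 1 then (if j = 0 then 0 else g j * A $$ (i,l)) else 0))"
      by (rule sum.cong) (auto simp: T_def j)
    also have "\<dots> = A $$ (i,j) + (if j = 0 then 0 else g j * A $$ (i, j - 1))"
      using j by (simp add: sum.distrib)
    finally show "mat n n (\<lambda>(i,j). A $$ (i,j) + (if j = 0 then 0 else g j * A $$ (i, j - 1))) $$ (i, j)
        = (A * T) $$ (i, j)"
      using i j by simp
  qed (use A T in auto)
  then show ?thesis using det_mult[OF A T] det_T by simp
qed

lemma det_add_to_first_row:
  fixes A :: "'a::comm_ring_1 mat"
  assumes A: "A \<in> carrier_mat n n" and n: "0 < n"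
  shows "det (mat n n (\<lambda>(i,j). A $$ (i,j) + (if i = 0 then z j else 0)))
    = det A + (\<Sum>j<n. z j * cofactor A 0 j)"
proof -
  define Z where "Z = mat n n (\<lambda>(i,j). A $$ (i,j) + (if i = 0 then z j else 0))"
  have Z: "Z \<in> carrier_mat n n" by (simp add: Z_def)
  have cofactor_Z: "cofactor Z 0 j = cofactor A 0 j" for j
    unfolding cofactor_def
    by (rule arg_cong[where f = "\<lambda>M. _ * det M"], rule eq_matI) (use A in \<open>auto simp: mat_delete_def Z_def\<close>)
  have "det Z = (\<Sum>j<n. Z $$ (0,j) * cofactor Z 0 j)"
    by (rule laplace_expansion_row[OF Z n])
  also have "\<dots> = (\<Sum>j<n. A $$ (0,j) * cofactor A 0 j + z j * cofactor A 0 j)"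
  proof (rule sum.cong)
    fix j assume "j \<in> {..<n}"
    then have "Z $$ (0,j) = A $$ (0,j) + z j" using n by (simp add: Z_def)
    then show "Z $$ (0,j) * cofactor Z 0 j = A $$ (0,j) * cofactor A 0 j + z j * cofactor A 0 j"
      by (simp add: cofactor_Z distrib_right)
  qed simp
  also have "\<dots> = det A + (\<Sum>j<n. z j * cofactor A 0 j)"
    using laplace_expansion_row[OF A n] by (simp add: sum.distrib)
  finally show ?thesis unfolding Z_def .
qed

lemma det_mat_delete_first_row_unit_hessenberg:
  fixes A :: "'a::comm_ring_1 mat"
  assumes "A \<in> carrier_mat n n" and "c < n"
    and "\<And>i j. i < n \<Longrightarrow> j + 1 < i \<Longrightarrow> A $$ (i,j) = 0"
    and "\<And>j. j + 1 < n \<Longrightarrow> A $$ (j + 1, j) = 1"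
  shows "det (mat_delete A 0 c) = det (mat (n-c-1) (n-c-1) (\<lambda>(i,j). A $$ (c+1+i, c+1+j)))"
  using assms
proof (induction c arbitrary: n A)
  case 0
  have "mat_delete A 0 0 = mat (n-1) (n-1) (\<lambda>(i,j). A $$ (1+i, 1+j))"
    by (rule eq_matI) (use 0 in \<open>auto simp: mat_delete_def\<close>)
  then show ?case by simp
next
  case (Suc c)
  define D where "D = mat_delete A 0 (Suc c)"
  define A' where "A' = mat_delete A 1 0"
  have D: "D \<in> carrier_mat (n-1) (n-1)" and A': "A' \<in> carrier_mat (n-1) (n-1)"
    using Suc.prems(1) by (auto simp: D_def A'_def mat_delete_carrier)
  have "det D = (\<Sum>i<n-1. D $$ (i,0) * cofactor D i 0)"
    by (rule laplace_expansion_column[OF D]) (use Suc.prems(2) in simp)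
  also have "\<dots> = (\<Sum>i<n-1. if i = 0 then cofactor D 0 0 else 0)"
    by (rule sum.cong) (use Suc.prems Suc.prems(4)[of 0] in \<open>auto simp: D_def mat_delete_def\<close>)
  also have "\<dots> = det (mat_delete D 0 0)"
    using Suc.prems(2) by (simp add: cofactor_def)
  also have "mat_delete D 0 0 = mat_delete A' 0 c"
    by (rule eq_matI) (use Suc.prems(1) in \<open>auto simp: D_def A'_def mat_delete_def\<close>)
  also have "det (mat_delete A' 0 c) = det (mat (n-1-c-1) (n-1-c-1) (\<lambda>(i,j). A' $$ (c+1+i, c+1+j)))"
    by (rule Suc.IH[OF A']) (use Suc.prems in \<open>auto simp: A'_def mat_delete_def\<close>)
  also have "mat (n-1-c-1) (n-1-c-1) (\<lambda>(i,j). A' $$ (c+1+i, c+1+j))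
      = mat (n - Suc c - 1) (n - Suc c - 1) (\<lambda>(i,j). A $$ (Suc c+1+i, Suc c+1+j))"
    by (rule eq_matI) (use Suc.prems(1,2) in \<open>auto simp: A'_def mat_delete_def\<close>)
  finally show ?case unfolding D_def .
qed

definition first_row_correction :: "(nat \<Rightarrow> 'a::comm_ring_1) \<Rightarrow> (nat \<Rightarrow> 'a) \<Rightarrow> nat \<Rightarrow> 'a" where
  "first_row_correction \<beta> h c = (-1) ^ c * (\<Sum>j\<le>c. (-1) ^ j * \<beta> j * (\<Prod>i = Suc j..Suc c. h i))"

lemma first_row_correction_0: "first_row_correction \<beta> h 0 = h 1 * \<beta> 0"
  by (simp add: first_row_correction_def)

lemma first_row_correction_Suc:
  "first_row_correction \<beta> h (Suc c) = h (Suc (Suc c)) * (\<beta> (Suc c) - first_row_correction \<beta> h c)"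
proof -
  have "(\<Sum>j\<le>Suc c. (-1) ^ j * \<beta> j * (\<Prod>i = Suc j..Suc (Suc c). h i))
      = h (Suc (Suc c)) * (\<Sum>j\<le>c. (-1) ^ j * \<beta> j * (\<Prod>i = Suc j..Suc c. h i))
        + (-1) ^ Suc c * \<beta> (Suc c) * h (Suc (Suc c))"
    by (simp add: prod.cl_ivl_Suc sum_distrib_left algebra_simps del: prod.op_ivl_Suc)
  then show ?thesis
    by (simp add: first_row_correction_def algebra_simps power_add[symmetric] flip: mult_2)
qed

lemma sum_triangle_swap:
  fixes F :: "nat \<Rightarrow> nat \<Rightarrow> 'a::comm_monoid_add"
  shows "(\<Sum>c<k. \<Sum>j\<le>c. F j c) = (\<Sum>j<k. \<Sum>r = 1..k-j. F j (j+r-1))"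
proof (induction k)
  case (Suc k)
  have "(\<Sum>r = 1..Suc k-j. F j (j+r-1)) = (\<Sum>r = 1..k-j. F j (j+r-1)) + F j k" if "j \<le> k" for j
    using that by (simp add: Suc_diff_le)
  then have "(\<Sum>j<Suc k. \<Sum>r = 1..Suc k-j. F j (j+r-1))
      = (\<Sum>j<k. \<Sum>r = 1..k-j. F j (j+r-1)) + (\<Sum>j\<le>k. F j k)"
    by (simp add: sum.distrib add.assoc flip: lessThan_Suc_atMost)
  then show ?case using Suc by simp
qed simp

lemma sum_first_row_correction_signed:
  "(\<Sum>c<k. first_row_correction \<beta> h c * ((-1) ^ c * e c))
    = (\<Sum>j<k. (-1) ^ j * \<beta> j * (\<Sum>r = 1..k-j. (\<Prod>i = 1..r. h (j+i)) * e (j+r-1)))"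
proof -
  have "(\<Sum>c<k. first_row_correction \<beta> h c * ((-1) ^ c * e c))
      = (\<Sum>c<k. \<Sum>j\<le>c. (-1) ^ j * \<beta> j * ((\<Prod>i = Suc j..Suc c. h i) * e c))"
    by (simp add: first_row_correction_def sum_distrib_left sum_distrib_right algebra_simps power_add[symmetric] flip: mult_2)
  also have "\<dots> = (\<Sum>j<k. \<Sum>r = 1..k-j. (-1) ^ j * \<beta> j * ((\<Prod>i = Suc j..j+r. h i) * e (j+r-1)))"
    by (subst sum_triangle_swap) (auto intro!: sum.cong)
  also have "\<dots> = (\<Sum>j<k. (-1) ^ j * \<beta> j * (\<Sum>r = 1..k-j. (\<Prod>i = 1..r. h (j+i)) * e (j+r-1)))"
  proof -
    have "(\<Prod>i = Suc j..j+r. h i) = (\<Prod>i = 1..r. h (j+i))" for j r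
      using prod.shift_bounds_cl_nat_ivl[of h 1 j r] by (simp add: add.commute)
    then show ?thesis by (simp add: sum_distrib_left)
  qed
  finally show ?thesis .
qed

definition Delta_mat :: "(nat \<Rightarrow> complex poly) \<Rightarrow> nat \<Rightarrow> nat \<Rightarrow> nat \<Rightarrow> complex mat" where
  "Delta_mat Q k n s = mat k k (\<lambda>(i, j).
      if i = 0 then (\<Sum>c'\<le>j. of_nat ((n - k + c') choose (s - 1))) * coeff (Q (n - k + j + 1)) (n - k)
      else coeff (Q (n - k + j + 1)) (n - k + i))"

lemma Delta_eq_det_Delta_mat: "Delta Q k n s = det (Delta_mat Q k n s)"
  unfolding Delta_def Delta_mat_def by (rule arg_cong[where f = det], rule eq_matI) auto

lemma cofactor_Delta_mat_first_row:
  assumes monic: "\<And>m. lead_coeff (P m) = 1" and deg: "\<And>m. degree (P m) = m" and c: "c < k"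
  shows "cofactor (Delta_mat P k n s) 0 c = (-1) ^ c * E P k n c"
proof -
  have "det (mat_delete (Delta_mat P k n s) 0 c)
      = det (mat (k-c-1) (k-c-1) (\<lambda>(i,j). Delta_mat P k n s $$ (c+1+i, c+1+j)))"
    by (rule det_mat_delete_first_row_unit_hessenberg)
      (use c monic deg in \<open>auto simp: Delta_mat_def coeff_eq_0\<close>)
  also have "\<dots> = E P k n c"
  proof (cases "c = k - 1")
    case False
    then show ?thesis unfolding E_def
      by (simp, intro arg_cong[where f = det] eq_matI) (auto simp: Delta_mat_def algebra_simps)
  qed (simp add: E_def)
  finally show ?thesis by (simp add: cofactor_def)
qed

lemma Delta_P1_eq_det_corrected_first_row:
  fixes P :: "nat \<Rightarrow> complex poly" and \<gamma> :: "nat \<Rightarrow> complex" and k n s :: nat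
  assumes monic: "\<And>m. lead_coeff (P m) = 1" and deg: "\<And>m. degree (P m) = m"
  defines "\<beta> \<equiv> \<lambda>j. of_nat ((n - k + j) choose (s - 1)) * coeff (P (n - k + j)) (n - k)"
  shows "Delta (P1 P \<gamma>) k n s = det (mat k k (\<lambda>(i,j). Delta_mat P k n s $$ (i,j)
           + (if i = 0 then first_row_correction \<beta> (\<lambda>l. \<gamma> (n - k + l)) j else 0)))"
proof -
  define m where "m = n - k"
  define S where "S j = (\<Sum>c'\<le>j. of_nat ((m + c') choose (s - 1)) :: complex)" for j
  define z where "z = first_row_correction \<beta> (\<lambda>l. \<gamma> (m + l))"
  define Z where "Z = mat k k (\<lambda>(i,j). Delta_mat P k n s $$ (i,j) + (if i = 0 then z j else 0))"
  have Z: "Z \<in> carrier_mat k k" by (simp add: Z_def)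
  define Z' where "Z' = mat k k (\<lambda>(i,j). Z $$ (i,j) + (if j = 0 then 0 else \<gamma> (m + j + 1) * Z $$ (i, j - 1)))"
  have "Delta_mat (P1 P \<gamma>) k n s = Z'"
  proof (rule eq_matI)
    fix i j assume "i < dim_row Z'" and "j < dim_col Z'"
    then have i: "i < k" and j: "j < k" by (auto simp: Z'_def)
    consider "i = 0" "j = 0" | j' where "i = 0" "j = Suc j'" | "i > 0"
      by (cases j) auto
    then show "Delta_mat (P1 P \<gamma>) k n s $$ (i,j) = Z' $$ (i,j)"
    proof cases
      case 1
      then show ?thesis using i j monic[of m] deg[of m]
        by (simp add: Delta_mat_def Z'_def Z_def P1_def z_def first_row_correction_0 \<beta>_def m_def[symmetric] algebra_simps)
    next
      case (2 j')
      have "S j = S j' + of_nat ((m + j) choose (s - 1))" by (simp add: S_def 2)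
      moreover have "z j = \<gamma> (m + j + 1) * (\<beta> j - z j')"
        by (simp add: z_def 2 first_row_correction_Suc)
      ultimately show ?thesis using i j
        by (simp add: Delta_mat_def Z'_def Z_def P1_def S_def[symmetric] \<beta>_def m_def[symmetric] 2 algebra_simps)
    next
      case 3
      then show ?thesis using i j deg[of m]
        by (cases j) (auto simp: Delta_mat_def Z'_def Z_def P1_def m_def[symmetric] coeff_eq_0)
    qed
  qed (simp_all add: Delta_mat_def Z'_def)
  then have "Delta (P1 P \<gamma>) k n s = det Z"
    unfolding Delta_eq_det_Delta_mat Z'_def by (simp only: det_add_scaled_previous_columns[OF Z])
  then show ?thesis unfolding Z_def z_def m_def .
qed

theorem lemma4:
  fixes P :: "nat \<Rightarrow> complex poly" and \<gamma> :: "nat \<Rightarrow> complex" and n k s :: nat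
  assumes monic: "\<And>m. lead_coeff (P m) = 1"
    and deg: "\<And>m. degree (P m) = m"
    and gamma_nz: "\<And>m. m \<ge> 1 \<Longrightarrow> \<gamma> m \<noteq> 0"
    and n: "n \<ge> 1" and k: "1 \<le> k" "k \<le> n" and s: "s \<ge> 1"
  shows "Delta (P1 P \<gamma>) k n s =
     Delta P k n s +
     (\<Sum>j<k. (-1) ^ j * of_nat ((n - k + j) choose (s - 1)) * coeff (P (n - k + j)) (n - k) *
        (\<Sum>r = 1..k - j. (\<Prod>i = 1..r. \<gamma> (n - k + j + i)) * E P k n (j + r - 1)))"
proof -
  define \<beta> where "\<beta> = (\<lambda>j. of_nat ((n - k + j) choose (s - 1)) * coeff (P (n - k + j)) (n - k))"
  have "Delta (P1 P \<gamma>) k n s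
      = Delta P k n s + (\<Sum>c<k. first_row_correction \<beta> (\<lambda>l. \<gamma> (n - k + l)) c * cofactor (Delta_mat P k n s) 0 c)"
    unfolding Delta_P1_eq_det_corrected_first_row[OF monic deg] \<beta>_def
    by (subst Delta_eq_det_Delta_mat, rule det_add_to_first_row) (use k in \<open>auto simp: Delta_mat_def\<close>)
  also have "\<dots> = Delta P k n s + (\<Sum>c<k. first_row_correction \<beta> (\<lambda>l. \<gamma> (n - k + l)) c * ((-1) ^ c * E P k n c))"
    by (simp add: cofactor_Delta_mat_first_row[OF monic deg])
  finally show ?thesis
    by (simp add: sum_first_row_correction_signed \<beta>_def add.assoc mult.assoc)
qed

end
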